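(* Let $R,LM,C,\widetilde C,Ceq,\widetilde{Ceq}$ be as below and assume all conditions (1.1)–(7b) listed below hold; let $\sim,\simeq$ be as below. Then: (i) if $(\Gamma,T)\in C$, $\Gamma'\in C$ and $\Gamma\sim\Gamma'$, there exists $T'$ with $(\Gamma',T')\in C$ and $(\Gamma,T)\sim(\Gamma',T')$; (ii) if $(\Gamma\vdash o:S)\in\widetilde C$ and $(\Gamma,S)\sim(\Gamma',S')$ with $(\Gamma',S')\in C$, there exists $o'$ with $(\Gamma'\vdash o':S')\in\widetilde C$ and $(\Gamma'\vdash o':S')\simeq(\Gamma\vdash o:S)$. Conditions (for all well-formed data, $n=l(\Gamma)$, $i=l(\Gamma_1)$): (1.1) $(\rhd)$; (1.2) $(\Gamma,T\rhd)\Rightarrow(\Gamma\rhd)$; (1.3) $(\Gamma\vdash r:R)\Rightarrow(\Gamma,R\rhd)$; (1.4) $(\Gamma,T\rhd)\wedge(\Gamma,\Delta\vdash r:R)\Rightarrow(\Gamma,T,t_{n+1}\Delta\vdash t_{n+1}r:t_{n+1}R)$; (1.5) $(\Gamma\vdash s:S)\wedge(\Gamma,S,\Delta\vdash r:R)\Rightarrow(\Gamma,s_{n+1}(\Delta[s/n+1])\vdash s_{n+1}(r[s/n+1]):s_{n+1}(R[s/n+1]))$; (1.6) $(\Gamma,T\rhd)\Rightarrow(\Gamma,T\vdash n+1:t_{n+1}T)$; (2a) $(\Gamma\vdash T=T')\Rightarrow(\Gamma,T\rhd)$; (2b) $(\Gamma,T\rhd)\Rightarrow(\Gamma\vdash T=T)$;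 (2c) symmetry and (2d) transitivity of $(\Gamma\vdash T=T')$ in $T,T'$; (3a) $(\Gamma\vdash o=o':T)\Rightarrow(\Gamma\vdash o:T)$; (3b) $(\Gamma\vdash o:T)\Rightarrow(\Gamma\vdash o=o:T)$; (3c) symmetry and (3d) transitivity of $(\Gamma\vdash o=o':T)$ in $o,o'$; (4a) $(\Gamma_1\vdash T=T')\wedge(\Gamma_1,T,\Gamma_2\vdash S=S')\Rightarrow(\Gamma_1,T',\Gamma_2\vdash S=S')$; (4b) $(\Gamma_1\vdash T=T')\wedge(\Gamma_1,T,\Gamma_2\vdash o=o':S)\Rightarrow(\Gamma_1,T',\Gamma_2\vdash o=o':S)$; (4c) $(\Gamma\vdash S=S')\wedge(\Gamma\vdash o=o':S)\Rightarrow(\Gamma\vdash o=o':S')$; (5a) $(\Gamma_1,T\rhd)\wedge(\Gamma_1,\Gamma_2\vdash S=S')\Rightarrow(\Gamma_1,T,t_{i+1}\Gamma_2\vdash t_{i+1}S=t_{i+1}S')$; (5b) $(\Gamma_1,T\rhd)\wedge(\Gamma_1,\Gamma_2\vdash o=o':S)\Rightarrow(\Gamma_1,T,t_{i+1}\Gamma_2\vdash t_{i+1}o=t_{i+1}o':t_{i+1}S)$; (6a) $(\Gamma_1,T,\Gamma_2\vdash S=S')\wedge(\Gamma_1\vdash r:T)\Rightarrow(\Gamma_1,s_{i+1}(\Gamma_2[r/i+1])\vdash s_{i+1}(S[r/i+1])=s_{i+1}(S'[r/i+1]))$; (6b) the analogous statement for $(\Gamma_1,T,\Gamma_2\vdash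 o=o':S)$, concluding $(\Gamma_1,s_{i+1}(\Gamma_2[r/i+1])\vdash s_{i+1}(o[r/i+1])=s_{i+1}(o'[r/i+1]):s_{i+1}(S[r/i+1]))$; (7a) $(\Gamma_1,T,\Gamma_2,S\rhd)\wedge(\Gamma_1\vdash r=r':T)\Rightarrow(\Gamma_1,s_{i+1}(\Gamma_2[r/i+1])\vdash s_{i+1}(S[r/i+1])=s_{i+1}(S[r'/i+1]))$; (7b) $(\Gamma_1,T,\Gamma_2\vdash o:S)\wedge(\Gamma_1\vdash r=r':T)\Rightarrow(\Gamma_1,s_{i+1}(\Gamma_2[r/i+1])\vdash s_{i+1}(o[r/i+1])=s_{i+1}(o[r'/i+1]):s_{i+1}(S[r/i+1]))$.
   Context: $[n]=\{1,\dots,n\}$. $R$ is a monad on Sets (unit $\eta$, Kleisli extension $\mathrm{bind}$), $LM$ a left $R$-module with action $\rho(f):LM(X)\to LM(Y)$ for $f:X\to R(Y)$. Elements of $Y$ are regarded in $R(Y)$ via $\eta_Y$; $E(f_1/1,\dots,f_m/m)$ is $\rho(f)(E)$ or $\mathrm{bind}(f)(E)$ with $f(i)=f_i$. For $E$ in $LM([m])$ or $R([m])$, $m\ge n$: $t_{n+1}E:=E(1/1,\dots,n/n,n+2/n+1,\dots,m+1/m)$; for $m\ge n+1$, $s\in R([n])$: $s_{n+1}(E[s/n+1]):=E(1/1,\dots,n/n,s/n+1,n+1/n+2,\dots,m-1/m)$; both applied componentwise to sequences. $C,\widetilde C,Ceq,\widetilde{Ceq}$ are subsets of $\coprod_n\prod_{j<n}LM([j])$,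 $\coprod_n(\prod_{j\le n}LM([j]))\times R([n])$, $\coprod_n(\prod_{j<n}LM([j]))\times LM([n])^2$, $\coprod_n(\prod_{j\le n}LM([j]))\times R([n])^2$. Contexts: $\Gamma=(T_1,\dots,T_n)$, $T_j\in LM([j-1])$, $l(\Gamma)=n$, $ft$ drops the last entry, commas concatenate. $(\Gamma\rhd)$: $\Gamma\in C$; $(\Gamma\vdash t:T)$: $(\Gamma,T,t)\in\widetilde C$; $(\Gamma\vdash S=S')$: $(\Gamma,S,S')\in Ceq$; $(\Gamma\vdash o=o':S)$: $(\Gamma,S,o,o')\in\widetilde{Ceq}$. $\sim$ on $C$: $(T_1,\dots,T_n)\sim(T'_1,\dots,T'_n)$ iff $n=0$ or ($ft$'s related and $(T_1,\dots,T_{n-1}\vdash T_n=T'_n)$); different lengths never related. $\simeq$ on $\widetilde C$: $(\Gamma\vdash o:S)\simeq(\Gamma'\vdash o':S')$ iff $(\Gamma,S)\sim(\Gamma',S')$ and $(\Gamma\vdash o=o':S)$. *)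

theory Defs
  imports Main
begin

text \<open>
  The monad R on Sets is only ever used on the finite ordinals [n] = {1..n}.
  We represent it by a carrier family Rc n (standing for R([n])), the unit
  eta m i (the element i of [m] regarded in R([m])) and Kleisli extension
  bind m k f : R([m]) \<rightarrow> R([k]) for f : [m] \<rightarrow> R([k]) (f only matters on {1..m}).
  Likewise the left R-module LM is given by carriers LMc n and the action
  rho m k f : LM([m]) \<rightarrow> LM([k]).
\<close>

definition fin_monad ::
  "(nat \<Rightarrow> 'r set) \<Rightarrow> (nat \<Rightarrow> nat \<Rightarrow> 'r) \<Rightarrow> (nat \<Rightarrow> nat \<Rightarrow> (nat \<Rightarrow> 'r) \<Rightarrow> 'r \<Rightarrow> 'r) \<Rightarrow> bool"
where
  "fin_monad Rc eta bind \<longleftrightarrow>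
     (\<forall>m i. i \<in> {1..m} \<longrightarrow> eta m i \<in> Rc m) \<and>
     (\<forall>m k f x. (\<forall>i\<in>{1..m}. f i \<in> Rc k) \<longrightarrow> x \<in> Rc m \<longrightarrow> bind m k f x \<in> Rc k) \<and>
     (\<forall>m k f g x. (\<forall>i\<in>{1..m}. f i = g i) \<longrightarrow> x \<in> Rc m \<longrightarrow> bind m k f x = bind m k g x) \<and>
     (\<forall>m k f i. (\<forall>j\<in>{1..m}. f j \<in> Rc k) \<longrightarrow> i \<in> {1..m} \<longrightarrow> bind m k f (eta m i) = f i) \<and>
     (\<forall>m x. x \<in> Rc m \<longrightarrow> bind m m (eta m) x = x) \<and>
     (\<forall>m k l f g x. (\<forall>i\<in>{1..m}. f i \<in> Rc k) \<longrightarrow> (\<forall>j\<in>{1..k}. g j \<in> Rc l) \<longrightarrow> x \<in> Rc m \<longrightarrow>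
        bind k l g (bind m k f x) = bind m l (\<lambda>i. bind k l g (f i)) x)"

definition left_module ::
  "(nat \<Rightarrow> 'r set) \<Rightarrow> (nat \<Rightarrow> nat \<Rightarrow> 'r) \<Rightarrow> (nat \<Rightarrow> nat \<Rightarrow> (nat \<Rightarrow> 'r) \<Rightarrow> 'r \<Rightarrow> 'r)
   \<Rightarrow> (nat \<Rightarrow> 'l set) \<Rightarrow> (nat \<Rightarrow> nat \<Rightarrow> (nat \<Rightarrow> 'r) \<Rightarrow> 'l \<Rightarrow> 'l) \<Rightarrow> bool"
where
  "left_module Rc eta bind LMc rho \<longleftrightarrow>
     (\<forall>m k f E. (\<forall>i\<in>{1..m}. f i \<in> Rc k) \<longrightarrow> E \<in> LMc m \<longrightarrow> rho m k f E \<in> LMc k) \<and>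
     (\<forall>m k f g E. (\<forall>i\<in>{1..m}. f i = g i) \<longrightarrow> E \<in> LMc m \<longrightarrow> rho m k f E = rho m k g E) \<and>
     (\<forall>m E. E \<in> LMc m \<longrightarrow> rho m m (eta m) E = E) \<and>
     (\<forall>m k l f g E. (\<forall>i\<in>{1..m}. f i \<in> Rc k) \<longrightarrow> (\<forall>j\<in>{1..k}. g j \<in> Rc l) \<longrightarrow> E \<in> LMc m \<longrightarrow>
        rho k l g (rho m k f E) = rho m l (\<lambda>i. bind k l g (f i)) E)"

text \<open>Weakening t_{n+1} on E \<in> LM([m]) / R([m]), m \<ge> n.\<close>
definition wk_map :: "(nat \<Rightarrow> nat \<Rightarrow> 'r) \<Rightarrow> nat \<Rightarrow> nat \<Rightarrow> nat \<Rightarrow> 'r" where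
  "wk_map eta n m = (\<lambda>i. eta (Suc m) (if i \<le> n then i else Suc i))"

definition tL where "tL eta rho n m E = rho m (Suc m) (wk_map eta n m) E"
definition tR where "tR eta bind n m r = bind m (Suc m) (wk_map eta n m) r"

fun tseq where
  "tseq eta rho n m [] = []"
| "tseq eta rho n m (E # D) = tL eta rho n m E # tseq eta rho n (Suc m) D"

text \<open>Substitution s_{n+1}(E[s/n+1]) for E at level m \<ge> n+1, s \<in> R([n]);
  s is regarded in R([m-1]) via the inclusion [n] \<subseteq> [m-1].\<close>
definition sb_map where
  "sb_map eta bind n s m = (\<lambda>i. if i \<le> n then eta (m - 1) i
                               else if i = Suc n then bind n (m - 1) (eta (m - 1)) s
                               else eta (m - 1) (i - 1))"

definition sL where "sL eta bind rho n s m E = rho m (m - 1) (sb_map eta bind n s m) E"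
definition sR where "sR eta bind n s m r = bind m (m - 1) (sb_map eta bind n s m) r"

fun sseq where
  "sseq eta bind rho n s m [] = []"
| "sseq eta bind rho n s m (E # D) = sL eta bind rho n s m E # sseq eta bind rho n s (Suc m) D"

definition wfctx :: "(nat \<Rightarrow> 'l set) \<Rightarrow> 'l list \<Rightarrow> bool" where
  "wfctx LMc G \<longleftrightarrow> (\<forall>j < length G. G ! j \<in> LMc j)"

fun simn :: "('l list \<times> 'l \<times> 'l) set \<Rightarrow> nat \<Rightarrow> 'l list \<Rightarrow> 'l list \<Rightarrow> bool" where
  "simn Ceq 0 G G' = (G = [] \<and> G' = [])"
| "simn Ceq (Suc n) G G' = (length G = Suc n \<and> length G' = Suc n \<and>
      simn Ceq n (butlast G) (butlast G') \<and> (butlast G, last G, last G') \<in> Ceq)"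

definition ctx_sim :: "('l list \<times> 'l \<times> 'l) set \<Rightarrow> 'l list \<Rightarrow> 'l list \<Rightarrow> bool" where
  "ctx_sim Ceq G G' = simn Ceq (length G) G G'"

definition tm_sim :: "('l list \<times> 'l \<times> 'l) set \<Rightarrow> ('l list \<times> 'l \<times> 'r \<times> 'r) set
   \<Rightarrow> 'l list \<times> 'l \<times> 'r \<Rightarrow> 'l list \<times> 'l \<times> 'r \<Rightarrow> bool" where
  "tm_sim Ceq Cteq a b = (case a of (G, S, u) \<Rightarrow> case b of (G', S', u') \<Rightarrow>
      ctx_sim Ceq (G @ [S]) (G' @ [S']) \<and> (G, S, u, u') \<in> Cteq)"

end

theory Submission
  imports Defs
begin

text \<open>
  Take T' = T in (i) and o' = o in (ii). Rules (4a) and (4b) replace one entry of a context by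
  a judgmentally equal type; iterating them along the entries of \<Gamma> \<sim> \<Gamma>' transports every type
  and term equality from \<Gamma> to \<Gamma>'. Reflexivity (2b), (3b) supplies the equality to transport,
  (2a), (3a) turn it back into a judgment, and (4c) retypes o from S to S'.
\<close>

lemma simn_length: "simn Ceq n G G' \<Longrightarrow> length G = n \<and> length G' = n"
  by (cases n) auto

lemma ctx_sim_snoc:
  "ctx_sim Ceq (G @ [T]) (G' @ [T']) \<longleftrightarrow> ctx_sim Ceq G G' \<and> (G, T, T') \<in> Ceq"
  by (auto simp: ctx_sim_def dest: simn_length)

lemma simn_transport:
  assumes replace: "\<And>G1 T T' G2. (G1, T, T') \<in> Ceq \<Longrightarrow> P (G1 @ [T] @ G2) \<Longrightarrow> P (G1 @ [T'] @ G2)"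
  shows "simn Ceq n G G' \<Longrightarrow> P (G @ D) \<Longrightarrow> P (G' @ D)"
proof (induction n arbitrary: G G' D)
  case 0
  then show ?case by simp
next
  case (Suc n)
  then obtain H T H' T' where G: "G = H @ [T]" and G': "G' = H' @ [T']"
    by (metis append_butlast_last_id list.size(3) nat.distinct(1) simn.simps(2))
  with Suc.prems have sim: "simn Ceq n H H'" and eq: "(H, T, T') \<in> Ceq" by auto
  from Suc.prems(2) G have "P (H @ [T] @ D)" by simp
  then have "P (H @ (T' # D))" using replace[OF eq] by simp
  then have "P (H' @ (T' # D))" using Suc.IH[OF sim] by blast
  then show ?case using G' by simp
qed

lemma simn_sym:
  assumes sym: "\<And>G T T'. (G, T, T') \<in> Ceq \<Longrightarrow> (G, T', T) \<in> Ceq"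
    and replace: "\<And>G1 T T' G2 S S'. (G1, T, T') \<in> Ceq \<Longrightarrow> (G1 @ [T] @ G2, S, S') \<in> Ceq \<Longrightarrow>
        (G1 @ [T'] @ G2, S, S') \<in> Ceq"
  shows "simn Ceq n G G' \<Longrightarrow> simn Ceq n G' G"
proof (induction n arbitrary: G G')
  case 0
  then show ?case by simp
next
  case (Suc n)
  then have sim: "simn Ceq n (butlast G) (butlast G')"
    and eq: "(butlast G, last G', last G) \<in> Ceq" using sym by auto
  have "(butlast G' @ [], last G', last G) \<in> Ceq"
    by (rule simn_transport[where P = "\<lambda>H. (H, last G', last G) \<in> Ceq", OF _ sim])
      (use replace eq in auto)
  with Suc show ?case by auto
qed

lemma ctx_sim_sym:
  assumes "\<And>G T T'. (G, T, T') \<in> Ceq \<Longrightarrow> (G, T', T) \<in> Ceq"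
    and "\<And>G1 T T' G2 S S'. (G1, T, T') \<in> Ceq \<Longrightarrow> (G1 @ [T] @ G2, S, S') \<in> Ceq \<Longrightarrow>
        (G1 @ [T'] @ G2, S, S') \<in> Ceq"
    and "ctx_sim Ceq G G'"
  shows "ctx_sim Ceq G' G"
  using assms simn_sym[of Ceq "length G" G G'] simn_length
  unfolding ctx_sim_def by metis

theorem lemma6p5:
  fixes Rc :: "nat \<Rightarrow> 'r set" and eta :: "nat \<Rightarrow> nat \<Rightarrow> 'r"
    and bind :: "nat \<Rightarrow> nat \<Rightarrow> (nat \<Rightarrow> 'r) \<Rightarrow> 'r \<Rightarrow> 'r"
    and LMc :: "nat \<Rightarrow> 'l set" and rho :: "nat \<Rightarrow> nat \<Rightarrow> (nat \<Rightarrow> 'r) \<Rightarrow> 'l \<Rightarrow> 'l"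
    and C :: "'l list set" and Ct :: "('l list \<times> 'l \<times> 'r) set"
    and Ceq :: "('l list \<times> 'l \<times> 'l) set" and Cteq :: "('l list \<times> 'l \<times> 'r \<times> 'r) set"
  assumes monad: "fin_monad Rc eta bind"
    and module: "left_module Rc eta bind LMc rho"
    and C_wf: "\<And>G. G \<in> C \<Longrightarrow> wfctx LMc G"
    and Ct_wf: "\<And>G T t. (G, T, t) \<in> Ct \<Longrightarrow> wfctx LMc G \<and> T \<in> LMc (length G) \<and> t \<in> Rc (length G)"
    and Ceq_wf: "\<And>G S S'. (G, S, S') \<in> Ceq \<Longrightarrow> wfctx LMc G \<and> S \<in> LMc (length G) \<and> S' \<in> LMc (length G)"
    and Cteq_wf: "\<And>G S u u'. (G, S, u, u') \<in> Cteq \<Longrightarrow>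
        wfctx LMc G \<and> S \<in> LMc (length G) \<and> u \<in> Rc (length G) \<and> u' \<in> Rc (length G)"
    and c1_1: "[] \<in> C"
    and c1_2: "\<And>G T. G @ [T] \<in> C \<Longrightarrow> G \<in> C"
    and c1_3: "\<And>G R r. (G, R, r) \<in> Ct \<Longrightarrow> G @ [R] \<in> C"
    and c1_4: "\<And>G T D R r. G @ [T] \<in> C \<Longrightarrow> (G @ D, R, r) \<in> Ct \<Longrightarrow>
        (G @ [T] @ tseq eta rho (length G) (length G) D,
         tL eta rho (length G) (length G + length D) R,
         tR eta bind (length G) (length G + length D) r) \<in> Ct"
    and c1_5: "\<And>G S s D R r. (G, S, s) \<in> Ct \<Longrightarrow> (G @ [S] @ D, R, r) \<in> Ct \<Longrightarrow>
        (G @ sseq eta bind rho (length G) s (Suc (length G)) D,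
         sL eta bind rho (length G) s (Suc (length G) + length D) R,
         sR eta bind (length G) s (Suc (length G) + length D) r) \<in> Ct"
    and c1_6: "\<And>G T. G @ [T] \<in> C \<Longrightarrow>
        (G @ [T], tL eta rho (length G) (length G) T, eta (Suc (length G)) (Suc (length G))) \<in> Ct"
    and c2a: "\<And>G T T'. (G, T, T') \<in> Ceq \<Longrightarrow> G @ [T] \<in> C"
    and c2b: "\<And>G T. G @ [T] \<in> C \<Longrightarrow> (G, T, T) \<in> Ceq"
    and c2c: "\<And>G T T'. (G, T, T') \<in> Ceq \<Longrightarrow> (G, T', T) \<in> Ceq"
    and c2d: "\<And>G T T' T''. (G, T, T') \<in> Ceq \<Longrightarrow> (G, T', T'') \<in> Ceq \<Longrightarrow> (G, T, T'') \<in> Ceq"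
    and c3a: "\<And>G T u u'. (G, T, u, u') \<in> Cteq \<Longrightarrow> (G, T, u) \<in> Ct"
    and c3b: "\<And>G T u. (G, T, u) \<in> Ct \<Longrightarrow> (G, T, u, u) \<in> Cteq"
    and c3c: "\<And>G T u u'. (G, T, u, u') \<in> Cteq \<Longrightarrow> (G, T, u', u) \<in> Cteq"
    and c3d: "\<And>G T u u' u''. (G, T, u, u') \<in> Cteq \<Longrightarrow> (G, T, u', u'') \<in> Cteq \<Longrightarrow> (G, T, u, u'') \<in> Cteq"
    and c4a: "\<And>G1 T T' G2 S S'. (G1, T, T') \<in> Ceq \<Longrightarrow> (G1 @ [T] @ G2, S, S') \<in> Ceq \<Longrightarrow>
        (G1 @ [T'] @ G2, S, S') \<in> Ceq"
    and c4b: "\<And>G1 T T' G2 S u u'. (G1, T, T') \<in> Ceq \<Longrightarrow> (G1 @ [T] @ G2, S, u, u') \<in> Cteq \<Longrightarrow>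
        (G1 @ [T'] @ G2, S, u, u') \<in> Cteq"
    and c4c: "\<And>G S S' u u'. (G, S, S') \<in> Ceq \<Longrightarrow> (G, S, u, u') \<in> Cteq \<Longrightarrow> (G, S', u, u') \<in> Cteq"
    and c5a: "\<And>G1 T G2 S S'. G1 @ [T] \<in> C \<Longrightarrow> (G1 @ G2, S, S') \<in> Ceq \<Longrightarrow>
        (G1 @ [T] @ tseq eta rho (length G1) (length G1) G2,
         tL eta rho (length G1) (length G1 + length G2) S,
         tL eta rho (length G1) (length G1 + length G2) S') \<in> Ceq"
    and c5b: "\<And>G1 T G2 S u u'. G1 @ [T] \<in> C \<Longrightarrow> (G1 @ G2, S, u, u') \<in> Cteq \<Longrightarrow>
        (G1 @ [T] @ tseq eta rho (length G1) (length G1) G2,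
         tL eta rho (length G1) (length G1 + length G2) S,
         tR eta bind (length G1) (length G1 + length G2) u,
         tR eta bind (length G1) (length G1 + length G2) u') \<in> Cteq"
    and c6a: "\<And>G1 T G2 S S' r. (G1 @ [T] @ G2, S, S') \<in> Ceq \<Longrightarrow> (G1, T, r) \<in> Ct \<Longrightarrow>
        (G1 @ sseq eta bind rho (length G1) r (Suc (length G1)) G2,
         sL eta bind rho (length G1) r (Suc (length G1) + length G2) S,
         sL eta bind rho (length G1) r (Suc (length G1) + length G2) S') \<in> Ceq"
    and c6b: "\<And>G1 T G2 S u u' r. (G1 @ [T] @ G2, S, u, u') \<in> Cteq \<Longrightarrow> (G1, T, r) \<in> Ct \<Longrightarrow>
        (G1 @ sseq eta bind rho (length G1) r (Suc (length G1)) G2,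
         sL eta bind rho (length G1) r (Suc (length G1) + length G2) S,
         sR eta bind (length G1) r (Suc (length G1) + length G2) u,
         sR eta bind (length G1) r (Suc (length G1) + length G2) u') \<in> Cteq"
    and c7a: "\<And>G1 T G2 S r r'. G1 @ [T] @ G2 @ [S] \<in> C \<Longrightarrow> (G1, T, r, r') \<in> Cteq \<Longrightarrow>
        (G1 @ sseq eta bind rho (length G1) r (Suc (length G1)) G2,
         sL eta bind rho (length G1) r (Suc (length G1) + length G2) S,
         sL eta bind rho (length G1) r' (Suc (length G1) + length G2) S) \<in> Ceq"
    and c7b: "\<And>G1 T G2 S u r r'. (G1 @ [T] @ G2, S, u) \<in> Ct \<Longrightarrow> (G1, T, r, r') \<in> Cteq \<Longrightarrow>
        (G1 @ sseq eta bind rho (length G1) r (Suc (length G1)) G2,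
         sL eta bind rho (length G1) r (Suc (length G1) + length G2) S,
         sR eta bind (length G1) r (Suc (length G1) + length G2) u,
         sR eta bind (length G1) r' (Suc (length G1) + length G2) u) \<in> Cteq"
  shows "(\<forall>G T G'. G @ [T] \<in> C \<longrightarrow> G' \<in> C \<longrightarrow> ctx_sim Ceq G G' \<longrightarrow>
            (\<exists>T'. G' @ [T'] \<in> C \<and> ctx_sim Ceq (G @ [T]) (G' @ [T'])))
       \<and> (\<forall>G S u G' S'. (G, S, u) \<in> Ct \<longrightarrow> ctx_sim Ceq (G @ [S]) (G' @ [S']) \<longrightarrow> G' @ [S'] \<in> C \<longrightarrow>
            (\<exists>u'. (G', S', u') \<in> Ct \<and> tm_sim Ceq Cteq (G', S', u') (G, S, u)))"
proof (intro conjI allI impI)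
  have transport_Ceq: "(G' @ D, S, S') \<in> Ceq"
    if "ctx_sim Ceq G G'" "(G @ D, S, S') \<in> Ceq" for G G' D S S'
    using simn_transport[where P = "\<lambda>H. (H, S, S') \<in> Ceq", OF c4a] that
    by (auto simp: ctx_sim_def)
  have transport_Cteq: "(G' @ D, S, u, u') \<in> Cteq"
    if "ctx_sim Ceq G G'" "(G @ D, S, u, u') \<in> Cteq" for G G' D S u u'
    using simn_transport[where P = "\<lambda>H. (H, S, u, u') \<in> Cteq", OF c4b] that
    by (auto simp: ctx_sim_def)
  {
    fix G T G'
    assume T: "G @ [T] \<in> C" and sim: "ctx_sim Ceq G G'"
    have "(G' @ [], T, T) \<in> Ceq" using transport_Ceq[OF sim] c2b[OF T] by (metis append_Nil2)
    then show "\<exists>T'. G' @ [T'] \<in> C \<and> ctx_sim Ceq (G @ [T]) (G' @ [T'])"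
      using c2a c2b[OF T] sim by (auto simp: ctx_sim_snoc)
  }
  {
    fix G S u G' S'
    assume u: "(G, S, u) \<in> Ct" and sim: "ctx_sim Ceq (G @ [S]) (G' @ [S'])"
    then have "(G @ [], S', u, u) \<in> Cteq" using c4c c3b by (simp add: ctx_sim_snoc) blast
    then have uu: "(G', S', u, u) \<in> Cteq"
      using transport_Cteq sim by (fastforce simp: ctx_sim_snoc)
    have "ctx_sim Ceq (G' @ [S']) (G @ [S])"
      by (rule ctx_sim_sym) (use c2c c4a sim in auto)
    then show "\<exists>u'. (G', S', u') \<in> Ct \<and> tm_sim Ceq Cteq (G', S', u') (G, S, u)"
      using uu c3a by (fastforce simp: tm_sim_def)
  }
qed

end
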